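(* For $\lambda\ge0$ let $P_\lambda(q)=\lambda\int_0^qv(t)\,dt+(1-\lambda)\,q\,v(q)$ on $[0,1]$, let $\bar P_\lambda$ be its concave hull, $R^*(\lambda)=\max_{q\in[0,1]}P_\lambda(q)=\max_q\bar P_\lambda(q)$, $Q^*(\lambda)=\arg\max_{q\in[0,1]}\bar P_\lambda(q)$ (a point or a closed interval), $\ell(\lambda)=\inf Q^*(\lambda)$ and $r(\lambda)=\sup Q^*(\lambda)$. Then: (1) $R^*$ is continuous on $[0,\infty)$; (2) for any $\lambda>\lambda'\ge0$, $\ell(\lambda)\ge\ell(\lambda')$ and $r(\lambda)\ge r(\lambda')$; (3) $\lambda\mapsto Q^*(\lambda)$ is upper hemicontinuous on $[0,1]$; (4) for every $q\in[\ell(0),1]$ there is $\lambda\ge0$ with $q\in Q^*(\lambda)$; (5) if $\lambda'<\lambda$ and $\ell(\lambda)<r(\lambda')$, then $r(\lambda')=r(\lambda)=1$.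
   Context: $F$ is a value distribution (support $[v_L,v_H]$ or $[v_L,\infty)$, $v_L\ge0$, atomless except possibly at $v_H$, CDF $F(t)=\Pr[v<t]$, differentiable on the interior, with some price maximizing $p(1-F(p))$, finite mean). The value function is $v(q)=\inf\{v:F(v)>1-q\}$ for quantile $q\in[0,1]$; it is nonincreasing, nonnegative and left-continuous, and $q\,v(q)$ at $q=0$ is defined as its limit as $q\to0$. *)

theory Defs
  imports "HOL-Analysis.Analysis"
begin

text \<open>Standing assumptions on the value distribution. F t = Pr[v < t];
  support [vL, vH] (vH finite) or [vL, \<infinity>) (vH = \<infinity>).\<close>
definition value_dist :: "(real \<Rightarrow> real) \<Rightarrow> real \<Rightarrow> ereal \<Rightarrow> bool" where
  "value_dist F vL vH \<longleftrightarrow>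
     0 \<le> vL \<and> ereal vL \<le> vH \<and>
     \<comment> \<open>F is the (left-continuous) CDF t \<mapsto> Pr[v < t] of a probability distribution\<close>
     mono F \<and> (\<forall>t. (F \<longlongrightarrow> F t) (at_left t)) \<and> (F \<longlongrightarrow> 1) at_top \<and>
     \<comment> \<open>support is exactly [vL, vH] (resp. [vL, \<infinity>))\<close>
     (\<forall>t. t \<le> vL \<longrightarrow> F t = 0) \<and> (\<forall>t. vH < ereal t \<longrightarrow> F t = 1) \<and>
     strict_mono_on {t. vL \<le> t \<and> ereal t \<le> vH} F \<and>
     \<comment> \<open>atomless except possibly at vH\<close>
     (\<forall>t. ereal t \<noteq> vH \<longrightarrow> isCont F t) \<and>
     \<comment> \<open>differentiable on the interior of the support\<close>
     (\<forall>t. vL < t \<and> ereal t < vH \<longrightarrow> F differentiable (at t)) \<and>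
     \<comment> \<open>some price maximizes p (1 - F p)\<close>
     (\<exists>p\<ge>0. \<forall>p'\<ge>0. p' * (1 - F p') \<le> p * (1 - F p)) \<and>
     \<comment> \<open>finite mean: E[v] = \<integral>_0^\<infinity> (1 - F t) dt < \<infinity>\<close>
     (\<lambda>t. 1 - F t) integrable_on {0..}"

definition vq :: "(real \<Rightarrow> real) \<Rightarrow> real \<Rightarrow> real" where
  "vq F q = Inf {x. F x > 1 - q}"

definition qv :: "(real \<Rightarrow> real) \<Rightarrow> real \<Rightarrow> real" where
  "qv F q = (if q = 0 then Lim (at_right 0) (\<lambda>t. t * vq F t) else q * vq F q)"

definition Plam :: "(real \<Rightarrow> real) \<Rightarrow> real \<Rightarrow> real \<Rightarrow> real" where
  "Plam F lam q = lam * integral {0..q} (vq F) + (1 - lam) * qv F q"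

definition concave_hull01 :: "(real \<Rightarrow> real) \<Rightarrow> real \<Rightarrow> real" where
  "concave_hull01 P q =
     Inf {g q | g. concave_on {0..1} g \<and> (\<forall>x\<in>{0..1}. P x \<le> g x)}"

definition Pbar :: "(real \<Rightarrow> real) \<Rightarrow> real \<Rightarrow> real \<Rightarrow> real" where
  "Pbar F lam = concave_hull01 (Plam F lam)"

definition Rstar :: "(real \<Rightarrow> real) \<Rightarrow> real \<Rightarrow> real" where
  "Rstar F lam = Sup (Plam F lam ` {0..1})"

definition Qstar :: "(real \<Rightarrow> real) \<Rightarrow> real \<Rightarrow> real set" where
  "Qstar F lam = {q \<in> {0..1}. \<forall>q'\<in>{0..1}. Pbar F lam q' \<le> Pbar F lam q}"

definition lQ :: "(real \<Rightarrow> real) \<Rightarrow> real \<Rightarrow> real" where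
  "lQ F lam = Inf (Qstar F lam)"

definition rQ :: "(real \<Rightarrow> real) \<Rightarrow> real \<Rightarrow> real" where
  "rQ F lam = Sup (Qstar F lam)"

definition upper_hemicontinuous_on :: "'a::topological_space set \<Rightarrow> ('a \<Rightarrow> 'b::topological_space set) \<Rightarrow> bool" where
  "upper_hemicontinuous_on S \<Phi> \<longleftrightarrow>
     (\<forall>x\<in>S. \<forall>U. open U \<and> \<Phi> x \<subseteq> U \<longrightarrow> (\<forall>\<^sub>F y in at x within S. \<Phi> y \<subseteq> U))"

end

theory Submission
  imports Defs
begin

text \<open>Write P_lam = B + lam (A - B) with A q = \<integral>_0^q v and B q = q v(q). As v is nonincreasing,
  A - B is nondecreasing, so the family has single crossing in (lam, q): a maximizer for a larger lam
  can lie left of one for a smaller lam only if A and B are both flat in between, which forces v = 0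
  from there on. This yields the monotonicity of l and r, and r = 1 whenever the argmax sets overlap.
  For continuous P the concave hull is maximal exactly on [min argmax P, max argmax P], so
  Q*(lam) = [l(lam), r(lam)]. Since P_lam is Lipschitz in lam uniformly in q, R* is continuous and the
  argmax is upper hemicontinuous; every q \<ge> l(0) is then reached at the first lam with q \<le> r(lam),
  using r(1) = 1.\<close>

section \<open>Concave hull on the unit interval\<close>

lemma concave_on_affine: "convex S \<Longrightarrow> concave_on S (\<lambda>y::real. \<alpha> + \<beta> * y)"
  by (simp add: concave_on_iff ring_distribs flip: distrib_right)

lemma concave_hull01_le_majorant:
  assumes "concave_on {0..1} g" "\<forall>y\<in>{0..1}. P y \<le> g y" "x \<in> {0..1}"
  shows "concave_hull01 P x \<le> g x"
  unfolding concave_hull01_def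
proof (rule cInf_lower)
  show "g x \<in> {g x | g. concave_on {0..1} g \<and> (\<forall>y\<in>{0..1}. P y \<le> g y)}"
    using assms(1,2) by blast
  show "bdd_below {g x | g. concave_on {0..1} g \<and> (\<forall>y\<in>{0..1}. P y \<le> g y)}"
    using assms(3) by (intro bdd_belowI[of _ "P x"]) auto
qed

lemma concave_hull01_le_affine:
  assumes "\<forall>y\<in>{0..1}. P y \<le> \<alpha> + \<beta> * y" "x \<in> {0..1}"
  shows "concave_hull01 P x \<le> \<alpha> + \<beta> * x"
  using concave_hull01_le_majorant[OF concave_on_affine assms] by simp

lemma concave_hull01_ge_min:
  assumes "\<forall>y\<in>{0..1}. P y \<le> M" "a \<in> {0..1}" "b \<in> {0..1}" "x \<in> {a..b}"
  shows "min (P a) (P b) \<le> concave_hull01 P x"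
  unfolding concave_hull01_def
proof (rule cInf_greatest)
  show "{g x | g. concave_on {0..1} g \<and> (\<forall>y\<in>{0..1}. P y \<le> g y)} \<noteq> {}"
    using assms(1) by (auto intro!: exI[of _ "\<lambda>_. M"] simp: concave_on_const)
next
  fix z assume "z \<in> {g x | g. concave_on {0..1} g \<and> (\<forall>y\<in>{0..1}. P y \<le> g y)}"
  then obtain g where z: "z = g x" and "concave_on {0..1} g" and maj: "\<forall>y\<in>{0..1}. P y \<le> g y"
    by auto
  then have "concave_on {a..b} g"
    using assms(2,3) unfolding concave_on_def by (auto elim!: convex_on_subset)
  then have "min (g a) (g b) \<le> g x"
    using assms(4) by (rule concave_on_ge_min)
  moreover have "P a \<le> g a" "P b \<le> g b"
    using maj assms(2,3) by auto
  ultimately show "min (P a) (P b) \<le> z"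
    unfolding z by (meson min.mono order.trans)
qed

text \<open>Below a level M' < M on [0, c], the affine function through (0, M') and (c, M) is a
  majorant that stays below M on [0, c).\<close>
lemma concave_hull01_less_left:
  assumes "\<forall>y\<in>{0..1}. P y \<le> M" "\<forall>y\<in>{0..c}. P y \<le> M'" "M' < M" "0 \<le> x" "x < c" "c \<le> 1"
  shows "concave_hull01 P x < M"
proof -
  define s where "s = (M - M') / c"
  have "0 < c" "0 < s"
    using assms(3-5) by (simp_all add: s_def)
  then have "s * x < s * c" "s * c = M - M'"
    using assms(5) by (simp, simp add: s_def)
  moreover have "P y \<le> M' + s * y" if "y \<in> {0..1}" for y
  proof (cases "y \<le> c")
    case True
    then show ?thesis using assms(2,3) that by (auto simp: s_def intro!: add_increasing2)
  next
    case False
    then have "s * c \<le> s * y" using assms(3-5) by (intro mult_left_mono) (auto simp: s_def)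
    then show ?thesis using \<open>s * c = M - M'\<close> assms(1) that by force
  qed
  moreover have "x \<in> {0..1}" using assms(4-6) by simp
  ultimately show ?thesis
    using concave_hull01_le_affine[of P M' s x] by force
qed

lemma concave_hull01_less_right:
  assumes "\<forall>y\<in>{0..1}. P y \<le> M" "\<forall>y\<in>{c..1}. P y \<le> M'" "M' < M" "c < x" "x \<le> 1" "0 \<le> c"
  shows "concave_hull01 P x < M"
proof -
  define s where "s = (M - M') / (1 - c)"
  have "c < 1" "0 < s"
    using assms(3-5) by (simp_all add: s_def)
  then have "s * (1 - x) < s * (1 - c)" "s * (1 - c) = M - M'"
    using assms(4) by (simp, simp add: s_def)
  moreover have "P y \<le> (M' + s) + (- s) * y" if "y \<in> {0..1}" for y
  proof (cases "c \<le> y")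
    case True
    then have "P y \<le> M'" "0 \<le> s * (1 - y)" using assms(2) \<open>0 < s\<close> that by auto
    then show ?thesis by (simp add: algebra_simps)
  next
    case False
    then have "s * (1 - c) \<le> s * (1 - y)" using \<open>0 < s\<close> by (intro mult_left_mono) auto
    then show ?thesis using \<open>s * (1 - c) = M - M'\<close> assms(1) that by (force simp: algebra_simps)
  qed
  moreover have "x \<in> {0..1}" using assms(4-6) by simp
  ultimately show ?thesis
    using concave_hull01_le_affine[of P "M' + s" "- s" x] by (force simp: algebra_simps)
qed

lemma continuous_argmax_bounds:
  fixes P :: "real \<Rightarrow> real"
  assumes cont: "continuous_on {0..1} P"
  obtains a b M where "a \<in> {0..1}" "b \<in> {0..1}" "P a = M" "P b = M"
    "\<forall>x\<in>{0..1}. P x \<le> M" "\<forall>x\<in>{0..1}. P x = M \<longrightarrow> a \<le> x \<and> x \<le> b"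
proof -
  obtain m where m: "m \<in> {0..1}" "\<forall>y\<in>{0..1}. P y \<le> P m"
    using continuous_attains_sup[OF _ _ cont] by auto
  define Z where "Z = {x \<in> {0..1}. P x = P m}"
  have "closed Z"
    unfolding Z_def by (rule continuous_closed_preimage_constant[OF cont]) auto
  then have "compact Z"
    by (auto simp: compact_eq_bounded_closed Z_def intro: bounded_subset[of "{0..1}"])
  moreover have "Z \<noteq> {}" using m by (auto simp: Z_def)
  ultimately obtain a b where "a \<in> Z" "\<forall>t\<in>Z. a \<le> t" "b \<in> Z" "\<forall>t\<in>Z. t \<le> b"
    using compact_attains_inf compact_attains_sup by metis
  with m show ?thesis
    by (intro that[of a b "P m"]) (auto simp: Z_def)
qed

lemma concave_hull01_less_outside:
  assumes cont: "continuous_on {0..1} P" and le: "\<forall>y\<in>{0..1}. P y \<le> M"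
    and between: "\<forall>y\<in>{0..1}. P y = M \<longrightarrow> a \<le> y \<and> y \<le> b"
    and "a \<le> 1" "0 \<le> b" and x: "x \<in> {0..1}" "x \<notin> {a..b}"
  shows "concave_hull01 P x < M"
proof (cases "x < a")
  case True
  define c where "c = (x + a) / 2"
  have c: "x < c" "c < a" "c \<le> 1" using True \<open>a \<le> 1\<close> by (auto simp: c_def)
  obtain y0 where y0: "y0 \<in> {0..c}" "\<forall>y\<in>{0..c}. P y \<le> P y0"
    using continuous_attains_sup[of "{0..c}" P] continuous_on_subset[OF cont, of "{0..c}"] c x
    by auto
  have "P y0 < M" using le between y0(1) c by force
  then show ?thesis using concave_hull01_less_left[OF le y0(2)] c x by auto
next
  case False
  then have "b < x" using x by auto
  define c where "c = (x + b) / 2"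
  have c: "c < x" "b < c" "0 \<le> c" using \<open>b < x\<close> \<open>0 \<le> b\<close> by (auto simp: c_def)
  obtain y0 where y0: "y0 \<in> {c..1}" "\<forall>y\<in>{c..1}. P y \<le> P y0"
    using continuous_attains_sup[of "{c..1}" P] continuous_on_subset[OF cont, of "{c..1}"] c x
    by auto
  have "y0 \<in> {0..1}" "\<not> (a \<le> y0 \<and> y0 \<le> b)" using y0(1) c by auto
  then have "P y0 < M" using le between by force
  then show ?thesis using concave_hull01_less_right[OF le y0(2)] c x by auto
qed

lemma argmax_concave_hull01:
  fixes P :: "real \<Rightarrow> real"
  assumes cont: "continuous_on {0..1} P"
  obtains a b M where "a \<in> {0..1}" "b \<in> {0..1}" "P a = M" "P b = M"
    "\<forall>x\<in>{0..1}. P x \<le> M" "\<forall>x\<in>{0..1}. P x = M \<longrightarrow> a \<le> x \<and> x \<le> b"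
    "{q \<in> {0..1}. \<forall>q'\<in>{0..1}. concave_hull01 P q' \<le> concave_hull01 P q} = {a..b}"
proof -
  obtain a b M where ab: "a \<in> {0..1}" "b \<in> {0..1}" "P a = M" "P b = M"
    and le: "\<forall>x\<in>{0..1}. P x \<le> M" and between: "\<forall>x\<in>{0..1}. P x = M \<longrightarrow> a \<le> x \<and> x \<le> b"
    using continuous_argmax_bounds[OF cont] by blast
  have hull_le: "concave_hull01 P x \<le> M" if "x \<in> {0..1}" for x
    using concave_hull01_le_affine[of P M 0 x] le that by simp
  have hull_eq: "concave_hull01 P x = M" if "x \<in> {a..b}" for x
    using concave_hull01_ge_min[OF le ab(1,2) that] hull_le[of x] ab that by auto
  have "{q \<in> {0..1}. \<forall>q'\<in>{0..1}. concave_hull01 P q' \<le> concave_hull01 P q} = {a..b}"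
  proof (intro equalityI subsetI)
    fix q assume "q \<in> {q \<in> {0..1}. \<forall>q'\<in>{0..1}. concave_hull01 P q' \<le> concave_hull01 P q}"
    then have "q \<in> {0..1}" "concave_hull01 P a \<le> concave_hull01 P q"
      using ab by auto
    moreover have "concave_hull01 P a = M"
      using hull_eq between ab by auto
    ultimately show "q \<in> {a..b}"
      using concave_hull01_less_outside[OF cont le between] ab by force
  next
    fix q assume "q \<in> {a..b}"
    then show "q \<in> {q \<in> {0..1}. \<forall>q'\<in>{0..1}. concave_hull01 P q' \<le> concave_hull01 P q}"
      using hull_le hull_eq ab by auto
  qed
  with ab le between show ?thesis by (rule that)
qed


section \<open>Single-crossing families\<close>

locale single_crossing_family =
  fixes F A B :: "real \<Rightarrow> real"
  assumes Plam_eq: "Plam F lam q = lam * A q + (1 - lam) * B q"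
    and continuous_A: "continuous_on {0..1} A"
    and continuous_B: "continuous_on {0..1} B"
    and mono_A_minus_B: "0 \<le> x \<Longrightarrow> x \<le> y \<Longrightarrow> y \<le> 1 \<Longrightarrow> A x - B x \<le> A y - B y"
    and A_le_A1: "x \<in> {0..1} \<Longrightarrow> A x \<le> A 1"
    and flat_up_to_1: "0 \<le> x \<Longrightarrow> x < y \<Longrightarrow> y \<le> 1 \<Longrightarrow> A x = A y \<Longrightarrow> B x = B y \<Longrightarrow>
      A y = A 1 \<and> B y = B 1"
begin

lemma Plam_eq_B_plus: "Plam F lam q = B q + lam * (A q - B q)"
  by (simp add: Plam_eq algebra_simps)

lemma continuous_on_Plam: "continuous_on {0..1} (Plam F lam)"
  unfolding Plam_eq by (intro continuous_intros continuous_A continuous_B)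

lemma Plam_argmax:
  "lQ F lam \<in> {0..1} \<and> rQ F lam \<in> {0..1} \<and> Qstar F lam = {lQ F lam..rQ F lam} \<and>
   Plam F lam (lQ F lam) = Rstar F lam \<and> Plam F lam (rQ F lam) = Rstar F lam \<and>
   (\<forall>x\<in>{0..1}. Plam F lam x \<le> Rstar F lam) \<and>
   (\<forall>x\<in>{0..1}. Plam F lam x = Rstar F lam \<longrightarrow> lQ F lam \<le> x \<and> x \<le> rQ F lam)"
proof -
  obtain a b M where ab: "a \<in> {0..1}" "b \<in> {0..1}" "Plam F lam a = M" "Plam F lam b = M"
    and le: "\<forall>x\<in>{0..1}. Plam F lam x \<le> M"
    and between: "\<forall>x\<in>{0..1}. Plam F lam x = M \<longrightarrow> a \<le> x \<and> x \<le> b"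
    and argmax: "{q \<in> {0..1}. \<forall>q'\<in>{0..1}. Pbar F lam q' \<le> Pbar F lam q} = {a..b}"
    unfolding Pbar_def by (rule argmax_concave_hull01[OF continuous_on_Plam])
  have Q: "Qstar F lam = {a..b}"
    using argmax unfolding Qstar_def .
  have "a \<le> b" using ab between by blast
  then have "lQ F lam = a" "rQ F lam = b"
    by (simp_all add: lQ_def rQ_def Q)
  moreover have "Rstar F lam = M"
    unfolding Rstar_def using ab le by (intro cSup_eq_maximum) auto
  ultimately show ?thesis using ab le between Q by auto
qed

lemma lQ_in_unit: "lQ F lam \<in> {0..1}"
  using Plam_argmax by simp

lemma rQ_in_unit: "rQ F lam \<in> {0..1}"
  using Plam_argmax by simp

lemma Qstar_eq: "Qstar F lam = {lQ F lam..rQ F lam}"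
  using Plam_argmax by simp

lemma Plam_lQ: "Plam F lam (lQ F lam) = Rstar F lam"
  using Plam_argmax by simp

lemma Plam_rQ: "Plam F lam (rQ F lam) = Rstar F lam"
  using Plam_argmax by simp

lemma Plam_le_Rstar: "x \<in> {0..1} \<Longrightarrow> Plam F lam x \<le> Rstar F lam"
  using Plam_argmax by simp

lemma maximizer_between_lQ_rQ:
  "x \<in> {0..1} \<Longrightarrow> Plam F lam x = Rstar F lam \<Longrightarrow> lQ F lam \<le> x \<and> x \<le> rQ F lam"
  using Plam_argmax by simp

lemma lQ_le_rQ: "lQ F lam \<le> rQ F lam"
  using maximizer_between_lQ_rQ[OF lQ_in_unit Plam_lQ] by simp

lemma Plam_lipschitz_in_lam:
  obtains K where "0 < K" "\<And>x lam mu. x \<in> {0..1} \<Longrightarrow> \<bar>Plam F lam x - Plam F mu x\<bar> \<le> K * \<bar>lam - mu\<bar>"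
proof -
  have "compact ((\<lambda>q. A q - B q) ` {0..1})"
    by (intro compact_continuous_image continuous_intros continuous_A continuous_B) auto
  then obtain K where K: "0 < K" "\<forall>x\<in>{0..1}. \<bar>A x - B x\<bar> \<le> K"
    by (auto dest!: compact_imp_bounded simp: bounded_pos)
  have "\<bar>Plam F lam x - Plam F mu x\<bar> \<le> K * \<bar>lam - mu\<bar>" if "x \<in> {0..1}" for x lam mu
  proof -
    have "\<bar>Plam F lam x - Plam F mu x\<bar> = \<bar>lam - mu\<bar> * \<bar>A x - B x\<bar>"
      by (simp add: Plam_eq_B_plus abs_mult flip: left_diff_distrib)
    also have "\<dots> \<le> \<bar>lam - mu\<bar> * K" using K that by (intro mult_left_mono) auto
    finally show ?thesis by (simp add: mult.commute)
  qed
  with K(1) show ?thesis by (rule that)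
qed

lemma Rstar_lipschitz: obtains K where "K-lipschitz_on UNIV (Rstar F)"
proof -
  obtain K where K: "0 < K" "\<And>x lam mu. x \<in> {0..1} \<Longrightarrow> \<bar>Plam F lam x - Plam F mu x\<bar> \<le> K * \<bar>lam - mu\<bar>"
    using Plam_lipschitz_in_lam by blast
  have "Rstar F lam \<le> Rstar F mu + K * \<bar>lam - mu\<bar>" for lam mu
  proof -
    have "Rstar F lam = Plam F lam (lQ F lam)" by (simp add: Plam_lQ)
    also have "\<dots> \<le> Plam F mu (lQ F lam) + K * \<bar>lam - mu\<bar>"
      using K(2)[OF lQ_in_unit, of lam lam mu] by simp
    also have "\<dots> \<le> Rstar F mu + K * \<bar>lam - mu\<bar>"
      using Plam_le_Rstar[OF lQ_in_unit] by simp
    finally show ?thesis .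
  qed
  then have "dist (Rstar F lam) (Rstar F mu) \<le> K * dist lam mu" for lam mu
    using K(1) by (smt (verit) abs_minus_commute dist_real_def)
  with K(1) show ?thesis by (intro that lipschitz_onI) auto
qed

lemma continuous_Rstar: "continuous_on S (Rstar F)"
  by (metis Rstar_lipschitz lipschitz_on_continuous_on continuous_on_subset subset_UNIV)

lemma single_crossing:
  assumes "lam' < lam" "x < y"
    and x: "x \<in> {0..1}" "Plam F lam x = Rstar F lam"
    and y: "y \<in> {0..1}" "Plam F lam' y = Rstar F lam'"
  shows "A x = A y \<and> B x = B y"
proof -
  have le_x: "B y + lam * (A y - B y) \<le> B x + lam * (A x - B x)"
    using Plam_le_Rstar[OF y(1), of lam] x(2) by (simp add: Plam_eq_B_plus)
  have le_y: "B x + lam' * (A x - B x) \<le> B y + lam' * (A y - B y)"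
    using Plam_le_Rstar[OF x(1), of lam'] y(2) by (simp add: Plam_eq_B_plus)
  have "0 \<le> (lam - lam') * ((A x - B x) - (A y - B y))"
    using le_x le_y by (simp add: algebra_simps)
  then have "A y - B y \<le> A x - B x"
    using assms(1) by (simp add: zero_le_mult_iff)
  moreover have "A x - B x \<le> A y - B y"
    using mono_A_minus_B assms(2) x(1) y(1) by simp
  ultimately have D: "A x - B x = A y - B y" by linarith
  then have "B x = B y" using le_x le_y unfolding D by linarith
  with D show ?thesis by simp
qed

lemma mono_lQ: "mono (lQ F)"
proof (rule monoI, rule ccontr)
  fix lam' lam :: real assume "lam' \<le> lam" "\<not> lQ F lam' \<le> lQ F lam"
  then have "lam' < lam" "lQ F lam < lQ F lam'" by (auto simp: less_eq_real_def)
  then have "A (lQ F lam) = A (lQ F lam') \<and> B (lQ F lam) = B (lQ F lam')"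
    using single_crossing lQ_in_unit Plam_lQ by blast
  then have "Plam F lam' (lQ F lam) = Rstar F lam'"
    using Plam_lQ[of lam'] by (simp add: Plam_eq)
  then show False
    using maximizer_between_lQ_rQ[OF lQ_in_unit] \<open>lQ F lam < lQ F lam'\<close> by fastforce
qed

lemma mono_rQ: "mono (rQ F)"
proof (rule monoI, rule ccontr)
  fix lam' lam :: real assume "lam' \<le> lam" "\<not> rQ F lam' \<le> rQ F lam"
  then have "lam' < lam" "rQ F lam < rQ F lam'" by (auto simp: less_eq_real_def)
  then have "A (rQ F lam) = A (rQ F lam') \<and> B (rQ F lam) = B (rQ F lam')"
    using single_crossing rQ_in_unit Plam_rQ by blast
  then have "Plam F lam (rQ F lam') = Rstar F lam"
    using Plam_rQ[of lam] by (simp add: Plam_eq)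
  then show False
    using maximizer_between_lQ_rQ[OF rQ_in_unit] \<open>rQ F lam < rQ F lam'\<close> by fastforce
qed

lemma rQ_eq_1_if_overlap:
  assumes "lam' < lam" "lQ F lam < rQ F lam'"
  shows "rQ F lam' = 1 \<and> rQ F lam = 1"
proof -
  let ?x = "lQ F lam" and ?y = "rQ F lam'"
  have "A ?x = A ?y \<and> B ?x = B ?y"
    using single_crossing[OF assms] lQ_in_unit Plam_lQ rQ_in_unit Plam_rQ by blast
  then have "A ?y = A 1 \<and> B ?y = B 1"
    using flat_up_to_1 assms(2) lQ_in_unit rQ_in_unit by auto
  then have "Plam F mu 1 = Plam F mu ?y" for mu by (simp add: Plam_eq)
  moreover have "Plam F lam ?y = Rstar F lam"
    using \<open>A ?x = A ?y \<and> B ?x = B ?y\<close> Plam_lQ[of lam] by (simp add: Plam_eq)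
  ultimately have "1 \<le> rQ F lam' \<and> 1 \<le> rQ F lam"
    using maximizer_between_lQ_rQ[of 1] Plam_rQ by simp
  then show ?thesis using rQ_in_unit by (auto intro: order.antisym)
qed

text \<open>On the compact set K the gap between Rstar F lam0 and Plam F lam0 is bounded away from 0,
  and Plam is Lipschitz in lam uniformly in q, so the gap persists for nearby lam.\<close>
lemma eventually_non_maximizers:
  assumes "compact K" "K \<subseteq> {0..1}" "\<forall>x\<in>K. Plam F lam0 x < Rstar F lam0"
  shows "\<forall>\<^sub>F lam in nhds lam0. \<forall>x\<in>K. Plam F lam x < Rstar F lam"
proof (cases "K = {}")
  case False
  obtain k where k: "k \<in> K" "\<forall>y\<in>K. Plam F lam0 y \<le> Plam F lam0 k"
    using continuous_attains_sup[OF assms(1) False continuous_on_subset[OF continuous_on_Plam assms(2)]]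
    by blast
  define g where "g = Rstar F lam0 - Plam F lam0 k"
  have g: "0 < g" "\<forall>y\<in>K. Plam F lam0 y \<le> Rstar F lam0 - g"
    using k assms(3) by (auto simp: g_def)
  obtain L where L: "0 < L" "\<And>x lam mu. x \<in> {0..1} \<Longrightarrow> \<bar>Plam F lam x - Plam F mu x\<bar> \<le> L * \<bar>lam - mu\<bar>"
    using Plam_lipschitz_in_lam by blast
  have "\<forall>x\<in>K. Plam F lam x < Rstar F lam" if "dist lam lam0 < g / (2 * L)" for lam
  proof
    fix x assume "x \<in> K"
    have "2 * (L * \<bar>lam - lam0\<bar>) < g"
      using that L(1) by (simp add: dist_real_def field_simps)
    moreover have "Plam F lam x \<le> Plam F lam0 x + L * \<bar>lam - lam0\<bar>"
      using L(2)[of x lam lam0] \<open>x \<in> K\<close> assms(2) by auto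
    moreover have "Rstar F lam0 \<le> Plam F lam (lQ F lam0) + L * \<bar>lam - lam0\<bar>"
      using L(2)[OF lQ_in_unit, of lam0 lam0 lam] Plam_lQ[of lam0] by (simp add: abs_minus_commute)
    ultimately show "Plam F lam x < Rstar F lam"
      using g(2) \<open>x \<in> K\<close> Plam_le_Rstar[OF lQ_in_unit, of lam lam0] by fastforce
  qed
  then show ?thesis
    unfolding eventually_nhds_metric using g(1) L(1) by (intro exI[of _ "g / (2 * L)"]) auto
qed simp

lemma eventually_lQ_rQ_near:
  assumes "0 < \<epsilon>"
  shows "\<forall>\<^sub>F lam in nhds lam0. lQ F lam0 - \<epsilon> < lQ F lam \<and> rQ F lam < rQ F lam0 + \<epsilon>"
proof -
  define K where "K = {0..1} \<inter> ({..lQ F lam0 - \<epsilon>} \<union> {rQ F lam0 + \<epsilon>..})"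
  have "compact K" unfolding K_def
    by (intro compact_Int_closed compact_Icc closed_Un closed_atMost closed_atLeast)
  moreover have "K \<subseteq> {0..1}" by (auto simp: K_def)
  moreover have "Plam F lam0 x < Rstar F lam0" if "x \<in> K" for x
  proof -
    have "x \<in> {0..1}" "\<not> (lQ F lam0 \<le> x \<and> x \<le> rQ F lam0)"
      using that assms by (auto simp: K_def)
    then show ?thesis
      using Plam_le_Rstar maximizer_between_lQ_rQ by (meson order_le_less)
  qed
  ultimately have "\<forall>\<^sub>F lam in nhds lam0. \<forall>x\<in>K. Plam F lam x < Rstar F lam"
    by (intro eventually_non_maximizers) auto
  then show ?thesis
  proof (rule eventually_mono)
    fix lam assume "\<forall>x\<in>K. Plam F lam x < Rstar F lam"
    then show "lQ F lam0 - \<epsilon> < lQ F lam \<and> rQ F lam < rQ F lam0 + \<epsilon>"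
      using lQ_in_unit[of lam] rQ_in_unit[of lam] Plam_lQ[of lam] Plam_rQ[of lam]
      unfolding K_def by force
  qed
qed

lemma upper_hemicontinuous_Qstar: "upper_hemicontinuous_on S (Qstar F)"
  unfolding upper_hemicontinuous_on_def
proof (intro ballI allI impI)
  fix lam0 :: real and U :: "real set"
  assume U: "open U \<and> Qstar F lam0 \<subseteq> U"
  then have "lQ F lam0 \<in> U" "rQ F lam0 \<in> U"
    using Qstar_eq lQ_le_rQ by auto
  then obtain e1 e2 where e: "0 < e1" "ball (lQ F lam0) e1 \<subseteq> U" "0 < e2" "ball (rQ F lam0) e2 \<subseteq> U"
    using U open_contains_ball by metis
  define \<epsilon> where "\<epsilon> = min e1 e2"
  have "{lQ F lam0 - \<epsilon> <..< rQ F lam0 + \<epsilon>} \<subseteq> ball (lQ F lam0) e1 \<union> Qstar F lam0 \<union> ball (rQ F lam0) e2"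
    by (auto simp: Qstar_eq \<epsilon>_def dist_real_def)
  then have "{lQ F lam0 - \<epsilon> <..< rQ F lam0 + \<epsilon>} \<subseteq> U"
    using e U by blast
  moreover have "\<forall>\<^sub>F lam in nhds lam0. lQ F lam0 - \<epsilon> < lQ F lam \<and> rQ F lam < rQ F lam0 + \<epsilon>"
    using e by (intro eventually_lQ_rQ_near) (simp add: \<epsilon>_def)
  ultimately have "\<forall>\<^sub>F lam in nhds lam0. Qstar F lam \<subseteq> U"
    by (elim eventually_mono) (auto simp: Qstar_eq)
  then show "\<forall>\<^sub>F lam in at lam0 within S. Qstar F lam \<subseteq> U"
    unfolding eventually_at_filter by (elim eventually_mono) simp
qed

lemma rQ_1: "rQ F 1 = 1"
proof -
  have "Plam F 1 x \<le> Plam F 1 1" if "x \<in> {0..1}" for x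
    using A_le_A1[OF that] by (simp add: Plam_eq)
  then have "Plam F 1 1 = Rstar F 1"
    using Plam_le_Rstar[of 1 1] Plam_lQ[of 1] lQ_in_unit[of 1] by fastforce
  then show ?thesis
    using maximizer_between_lQ_rQ[of 1 1] rQ_in_unit[of 1] by auto
qed

text \<open>The parameter is the first lam \<in> [0, 1] with q \<le> rQ F lam; semicontinuity of rQ from above
  and of lQ from below puts q into Qstar F lam there.\<close>
lemma Qstar_covers:
  assumes q: "lQ F 0 \<le> q" "q \<le> 1"
  shows "\<exists>lam\<in>{0..1}. q \<in> Qstar F lam"
proof -
  define T where "T = {lam \<in> {0..1}. q \<le> rQ F lam}"
  define s where "s = Inf T"
  have "1 \<in> T" using q rQ_1 by (simp add: T_def)
  have bdd: "bdd_below T" by (auto simp: T_def intro: bdd_belowI[of _ 0])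
  have s: "0 \<le> s" "s \<le> 1"
    unfolding s_def using \<open>1 \<in> T\<close> cInf_lower[OF \<open>1 \<in> T\<close> bdd]
    by (auto simp: T_def intro: cInf_greatest)
  have "q \<le> rQ F s"
  proof (rule ccontr)
    assume "\<not> q \<le> rQ F s"
    then obtain d where d: "0 < d" "\<And>lam. dist lam s < d \<Longrightarrow> rQ F lam < q"
      using eventually_lQ_rQ_near[of "q - rQ F s" s] unfolding eventually_nhds_metric by auto
    obtain lam where "lam \<in> T" "lam < s + d"
      using cInf_lessD[of T "s + d"] \<open>1 \<in> T\<close> d(1) by (auto simp: s_def)
    moreover have "s \<le> lam" using cInf_lower[OF _ bdd] \<open>lam \<in> T\<close> by (simp add: s_def)
    ultimately show False using d(2)[of lam] by (auto simp: T_def dist_real_def)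
  qed
  moreover have "lQ F s \<le> q"
  proof (cases "s = 0")
    case False
    show ?thesis
    proof (rule ccontr)
      assume "\<not> lQ F s \<le> q"
      then obtain d where d: "0 < d" "\<And>lam. dist lam s < d \<Longrightarrow> q < lQ F lam"
        using eventually_lQ_rQ_near[of "lQ F s - q" s] unfolding eventually_nhds_metric by auto
      define lam where "lam = max 0 (s - d / 2)"
      have "lam \<in> {0..1}" "lam < s" "dist lam s < d"
        using s False d(1) by (auto simp: lam_def dist_real_def)
      then have "lam \<notin> T"
        using cInf_lower[OF _ bdd] by (force simp: s_def)
      then show False
        using d(2) \<open>lam \<in> {0..1}\<close> \<open>dist lam s < d\<close> lQ_le_rQ[of lam] by (force simp: T_def)
    qed
  qed (use q in simp)
  ultimately show ?thesis using s Qstar_eq by auto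
qed

end


section \<open>Quantile function of a value distribution\<close>

locale value_distribution =
  fixes F :: "real \<Rightarrow> real" and vL :: real and vH :: ereal
  assumes value_dist: "value_dist F vL vH"
begin

lemma vL_nonneg: "0 \<le> vL"
  and mono_F: "mono F"
  and F_left_continuous: "(F \<longlongrightarrow> F t) (at_left t)"
  and F_tendsto_1: "(F \<longlongrightarrow> 1) at_top"
  and F_below_vL: "t \<le> vL \<Longrightarrow> F t = 0"
  and F_above_vH: "vH < ereal t \<Longrightarrow> F t = 1"
  and strict_mono_F: "strict_mono_on {t. vL \<le> t \<and> ereal t \<le> vH} F"
  and integrable_survival: "(\<lambda>t. 1 - F t) integrable_on {0..}"
  using value_dist unfolding value_dist_def by auto


lemma F_le_1: "F x \<le> 1"
proof (rule tendsto_lowerbound[OF F_tendsto_1])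
  show "\<forall>\<^sub>F y in at_top. F x \<le> F y"
    using mono_F by (auto simp: eventually_at_top_linorder mono_def)
qed simp

lemma upper_set_nonempty: "0 < q \<Longrightarrow> {x. 1 - q < F x} \<noteq> {}"
  using order_tendstoD(1)[OF F_tendsto_1, of "1 - q"] by (auto dest: eventually_happens)

lemma upper_set_above_vL: "q \<le> 1 \<Longrightarrow> 1 - q < F x \<Longrightarrow> vL < x"
  using F_below_vL[of x] by force

lemma bdd_below_upper_set: "q \<le> 1 \<Longrightarrow> bdd_below {x. 1 - q < F x}"
  using upper_set_above_vL by (intro bdd_belowI[of _ vL]) force

lemma vq_ge_vL: "0 < q \<Longrightarrow> q \<le> 1 \<Longrightarrow> vL \<le> vq F q"
  unfolding vq_def using upper_set_above_vL
  by (intro cInf_greatest[OF upper_set_nonempty]) (auto intro: less_imp_le)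

lemma vq_nonneg: "0 < q \<Longrightarrow> q \<le> 1 \<Longrightarrow> 0 \<le> vq F q"
  using vq_ge_vL vL_nonneg by force

lemma vq_le: "q \<le> 1 \<Longrightarrow> 1 - q < F x \<Longrightarrow> vq F q \<le> x"
  unfolding vq_def by (rule cInf_lower[OF _ bdd_below_upper_set]) auto

lemma F_gt_if_gt_vq: "0 < q \<Longrightarrow> vq F q < x \<Longrightarrow> 1 - q < F x"
proof -
  assume "0 < q" "vq F q < x"
  then obtain y where "1 - q < F y" "y < x"
    using cInf_lessD[OF upper_set_nonempty] unfolding vq_def by blast
  then show ?thesis using mono_F by (smt (verit) monoD)
qed

lemma F_le_if_less_vq: "q \<le> 1 \<Longrightarrow> x < vq F q \<Longrightarrow> F x \<le> 1 - q"
  using vq_le[of q x] by linarith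

lemma F_le_if_le_vq:
  assumes "q \<le> 1" "x \<le> vq F q"
  shows "F x \<le> 1 - q"
proof (cases "x = vq F q")
  case True
  have "\<forall>\<^sub>F y in at_left x. F y \<le> 1 - q"
    using eventually_at_left_real[of "x - 1" x] by (rule eventually_mono) (use F_le_if_less_vq assms True in auto)
  then show ?thesis
    by (rule tendsto_upperbound[OF F_left_continuous]) simp
qed (use assms F_le_if_less_vq in simp)

lemma vq_le_vH: "0 < q \<Longrightarrow> q \<le> 1 \<Longrightarrow> ereal (vq F q) \<le> vH"
proof (rule ccontr)
  assume q: "0 < q" "q \<le> 1" and "\<not> ereal (vq F q) \<le> vH"
  then have "vH < ereal (vq F q)" by simp
  then obtain z where z: "vH < ereal z" "ereal z < ereal (vq F q)"
    using ereal_dense2 by blast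
  have "F z = 1" using F_above_vH z(1) by simp
  moreover have "F z \<le> 1 - q" using F_le_if_less_vq[OF q(2)] z(2) by simp
  ultimately show False using q by simp
qed

lemma vq_antimono: "0 < q \<Longrightarrow> q \<le> q' \<Longrightarrow> q' \<le> 1 \<Longrightarrow> vq F q' \<le> vq F q"
  unfolding vq_def by (rule cInf_superset_mono[OF upper_set_nonempty bdd_below_upper_set]) auto

lemma vq_upper_near:
  assumes "0 < q0" "0 < e"
  shows "\<exists>d>0. \<forall>q\<in>{0<..1}. q0 - d < q \<longrightarrow> vq F q < vq F q0 + e"
proof -
  define x where "x = vq F q0 + e / 2"
  have "1 - q0 < F x" using F_gt_if_gt_vq assms by (simp add: x_def)
  moreover have "vq F q < vq F q0 + e" if "q \<in> {0<..1}" "q0 - (F x - (1 - q0)) < q" for q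
    using vq_le[of q x] that assms(2) by (simp add: x_def)
  ultimately show ?thesis by (intro exI[of _ "F x - (1 - q0)"]) auto
qed

text \<open>Here strict monotonicity of F on the support is needed: it keeps F strictly below 1 - q0
  somewhat to the left of vq F q0, so that quantiles slightly above q0 cannot drop further.\<close>
lemma vq_lower_near:
  assumes q0: "q0 \<in> {0<..1}" and "0 < e"
  shows "\<exists>d>0. \<forall>q\<in>{0<..1}. q < q0 + d \<longrightarrow> vq F q0 - e < vq F q"
proof (cases "vq F q0 = vL")
  case True
  have "vq F q0 - e < vq F q" if "q \<in> {0<..1}" for q
    using vq_ge_vL[of q] that True \<open>0 < e\<close> by simp
  then show ?thesis by (intro exI[of _ 1]) auto
next
  case False
  then have "vL < vq F q0" using vq_ge_vL q0 by force
  define x where "x = max (vq F q0 - e / 2) ((vL + vq F q0) / 2)"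
  define x' where "x' = (x + vq F q0) / 2"
  have xs: "vL < x" "x < x'" "x' < vq F q0" "vq F q0 - e < x"
    using \<open>vL < vq F q0\<close> \<open>0 < e\<close> by (auto simp: x_def x'_def less_max_iff_disj)
  have "ereal x' \<le> vH"
    using order_trans[OF _ vq_le_vH, of x' q0] q0 xs(3) by simp
  moreover have "ereal x \<le> vH"
    using order_trans[OF _ calculation, of x] xs(2) by simp
  ultimately have "F x < F x'"
    using xs by (intro strict_mono_onD[OF strict_mono_F]) auto
  moreover have "F x' \<le> 1 - q0" using F_le_if_less_vq q0 xs(3) by simp
  ultimately have "0 < 1 - q0 - F x" by simp
  moreover have "vq F q0 - e < vq F q" if "q \<in> {0<..1}" "q < q0 + (1 - q0 - F x)" for q
  proof -
    have "x \<le> vq F q"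
      unfolding vq_def
    proof (rule cInf_greatest[OF upper_set_nonempty])
      fix y assume "y \<in> {x. 1 - q < F x}"
      then have "F x < F y" using that by simp
      then show "x \<le> y" using mono_F by (meson monoD not_le order_less_imp_not_less)
    qed (use that in simp)
    then show ?thesis using xs by simp
  qed
  ultimately show ?thesis by blast
qed

lemma continuous_on_vq: "continuous_on {0<..1} (vq F)"
  unfolding continuous_on_iff
proof (intro ballI allI impI)
  fix q0 e :: real assume q0: "q0 \<in> {0<..1}" and "0 < e"
  obtain d1 where "0 < d1" "\<forall>q\<in>{0<..1}. q0 - d1 < q \<longrightarrow> vq F q < vq F q0 + e"
    using vq_upper_near q0 \<open>0 < e\<close> by force
  moreover obtain d2 where "0 < d2" "\<forall>q\<in>{0<..1}. q < q0 + d2 \<longrightarrow> vq F q0 - e < vq F q"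
    using vq_lower_near q0 \<open>0 < e\<close> by force
  ultimately show "\<exists>d>0. \<forall>q\<in>{0<..1}. dist q q0 < d \<longrightarrow> dist (vq F q) (vq F q0) < e"
    by (intro exI[of _ "min d1 d2"]) (auto simp: dist_real_def abs_less_iff)
qed

lemma integrable_vq_Icc: "0 < a \<Longrightarrow> b \<le> 1 \<Longrightarrow> vq F integrable_on {a..b}"
  by (rule integrable_continuous_interval, rule continuous_on_subset[OF continuous_on_vq]) auto

lemma integral_vq_le:
  assumes "0 < a" "a \<le> b" "b \<le> 1"
  shows "integral {a..b} (vq F) \<le> (b - a) * vq F a"
proof -
  have "integral {a..b} (vq F) \<le> integral {a..b} (\<lambda>_. vq F a)"
    using assms vq_antimono by (intro integral_le integrable_vq_Icc) auto
  then show ?thesis using assms by simp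
qed

lemma integrable_survival_Icc: "0 \<le> c \<Longrightarrow> (\<lambda>t. 1 - F t) integrable_on {c..d}"
  by (rule integrable_on_subinterval[OF integrable_survival]) auto

lemma integral_survival_le: "0 \<le> c \<Longrightarrow> integral {c..d} (\<lambda>t. 1 - F t) \<le> integral {0..} (\<lambda>t. 1 - F t)"
  using F_le_1 by (intro integral_subset_le integrable_survival_Icc integrable_survival) auto

text \<open>A discrete layer-cake bound: halving q adds at most (q/2) vq F (q/2) to the integral of vq F,
  and 1 - F \<ge> q/2 on [vq F q, vq F (q/2)].\<close>
lemma integral_vq_dyadic:
  "integral {(1/2)^K..1} (vq F) + (1/2)^K * vq F ((1/2)^K)
    \<le> 2 * integral {vq F 1..vq F ((1/2)^K)} (\<lambda>t. 1 - F t) + vq F 1"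
proof (induction K)
  case (Suc K)
  define q where "q = (1/2::real)^K"
  define q' where "q' = (1/2::real)^Suc K"
  have q: "q = 2 * q'" "0 < q'" "q' < q" "q \<le> 1"
    by (auto simp: q_def q'_def power_le_one)
  have v: "0 \<le> vq F 1" "vq F 1 \<le> vq F q" "vq F q \<le> vq F q'"
    using vq_nonneg vq_antimono q by auto
  have "integral {q'..1} (vq F) = integral {q'..q} (vq F) + integral {q..1} (vq F)"
    using Henstock_Kurzweil_Integration.integral_combine[of q' q 1 "vq F"] integrable_vq_Icc[of q' 1] q
    by simp
  moreover have "integral {q'..q} (vq F) \<le> q' * vq F q'"
    using integral_vq_le[of q' q] q by simp
  moreover have "integral {vq F 1..vq F q'} (\<lambda>t. 1 - F t)
      = integral {vq F 1..vq F q} (\<lambda>t. 1 - F t) + integral {vq F q..vq F q'} (\<lambda>t. 1 - F t)"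
    using Henstock_Kurzweil_Integration.integral_combine[of "vq F 1" "vq F q" "vq F q'" "\<lambda>t. 1 - F t"]
      integrable_survival_Icc[OF v(1)] v by simp
  moreover have "integral {vq F q..vq F q'} (\<lambda>_. q') \<le> integral {vq F q..vq F q'} (\<lambda>t. 1 - F t)"
    using F_le_if_le_vq[of q'] q v by (intro integral_le integrable_survival_Icc) force+
  then have "q' * vq F q' - q' * vq F q \<le> integral {vq F q..vq F q'} (\<lambda>t. 1 - F t)"
    using v by (simp add: algebra_simps)
  moreover have "integral {q..1} (vq F) + q * vq F q \<le> 2 * integral {vq F 1..vq F q} (\<lambda>t. 1 - F t) + vq F 1"
    using Suc.IH by (simp add: q_def)
  moreover have "q * vq F q = 2 * (q' * vq F q)"
    using q(1) by simp
  ultimately have "integral {q'..1} (vq F) + q' * vq F q'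
      \<le> 2 * integral {vq F 1..vq F q'} (\<lambda>t. 1 - F t) + vq F 1"
    by linarith
  then show ?case by (simp add: q'_def)
qed simp

lemma integral_vq_dyadic_bounded:
  "integral {(1/2)^K..1} (vq F) \<le> 2 * integral {0..} (\<lambda>t. 1 - F t) + vq F 1"
proof -
  have "0 \<le> (1/2::real)^K * vq F ((1/2)^K)"
    using vq_nonneg[of "(1/2)^K"] by (simp add: power_le_one)
  moreover have "integral {vq F 1..vq F ((1/2)^K)} (\<lambda>t. 1 - F t) \<le> integral {0..} (\<lambda>t. 1 - F t)"
    using integral_survival_le vq_nonneg by simp
  ultimately show ?thesis using integral_vq_dyadic[of K] by linarith
qed

lemma integrable_vq: "vq F integrable_on {0..1}"
proof -
  define d where "d k = (1/2::real)^k" for k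
  define f where "f k x = (if x \<in> {d k..1} then vq F x else 0)" for k x
  define g where "g x = (if 0 < x then vq F x else 0)" for x :: real
  have d: "0 < d k" "d (Suc k) \<le> d k" "d k \<le> 1" for k
    by (auto simp: d_def power_le_one)
  have "{d k..1} \<inter> {0..1} = {d k..1}" for k using d by auto
  then have f: "f k integrable_on {0..1}" "integral {0..1} (f k) = integral {d k..1} (vq F)" for k
    unfolding f_def integrable_restrict_Int integral_restrict_Int using d by (auto intro: integrable_vq_Icc)
  have "g integrable_on {0..1} \<and> ((\<lambda>k. integral {0..1} (f k)) \<longlonglongrightarrow> integral {0..1} g)"
  proof (rule monotone_convergence_increasing[OF f(1)])
    fix k x
    show "f k x \<le> f (Suc k) x"
      using d[of k] d[of "Suc k"] vq_nonneg[of x] by (auto simp: f_def)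
  next
    fix x :: real assume x: "x \<in> {0..1}"
    have "\<forall>\<^sub>F k in sequentially. f k x = g x"
    proof (cases "x = 0")
      case False
      then have "\<forall>\<^sub>F k in sequentially. d k < x"
        using x unfolding d_def by (intro order_tendstoD(2)[OF LIMSEQ_realpow_zero]) auto
      then show ?thesis by (rule eventually_mono) (use x False in \<open>auto simp: f_def g_def\<close>)
    next
      case True
      then show ?thesis using d(1) by (simp add: f_def g_def not_le[symmetric])
    qed
    then show "(\<lambda>k. f k x) \<longlonglongrightarrow> g x" by (rule tendsto_eventually)
  next
    have "norm (integral {0..1} (f k)) \<le> 2 * integral {0..} (\<lambda>t. 1 - F t) + vq F 1" for k
    proof -
      have "0 \<le> integral {d k..1} (vq F)"
        using d[of k] vq_nonneg by (intro integral_nonneg integrable_vq_Icc) auto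
      then show ?thesis using integral_vq_dyadic_bounded[of k] f(2) by (simp add: d_def)
    qed
    then show "bounded (range (\<lambda>k. integral {0..1} (f k)))"
      unfolding bounded_iff by blast
  qed
  then have "g integrable_on {0..1}" ..
  then show ?thesis
    by (rule integrable_spike_finite[where S="{0}", rotated 2]) (auto simp: g_def)
qed

lemma integral_vq_ge:
  assumes "0 \<le> a" "a \<le> b" "0 < b" "b \<le> 1"
  shows "(b - a) * vq F b \<le> integral {a..b} (vq F)"
proof -
  define g where "g x = max (vq F b) (vq F x)" for x
  have g_eq: "g x = vq F x" if "x \<in> {a..b} - {0}" for x
    using vq_antimono[of x b] that assms by (simp add: g_def)
  have "vq F integrable_on {a..b}"
    using assms by (intro integrable_on_subinterval[OF integrable_vq]) auto
  then have "g integrable_on {a..b}"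
    using integrable_spike_finite[of "{0}" "{a..b}" g "vq F"] g_eq by blast
  then have "integral {a..b} (\<lambda>_. vq F b) \<le> integral {a..b} g"
    by (intro integral_le) (auto simp: g_def)
  also have "\<dots> = integral {a..b} (vq F)"
    using integral_spike[of "{0}" "{a..b}" "vq F" g] g_eq by simp
  finally show ?thesis using assms by simp
qed

lemma integral_vq_diff:
  assumes "0 \<le> x" "x \<le> y" "y \<le> 1"
  shows "integral {0..y} (vq F) - integral {0..x} (vq F) = integral {x..y} (vq F)"
proof -
  have "vq F integrable_on {0..y}"
    using assms by (intro integrable_on_subinterval[OF integrable_vq]) auto
  then show ?thesis
    using Henstock_Kurzweil_Integration.integral_combine[of 0 x y "vq F"] assms by simp
qed

lemma tendsto_q_vq_0: "((\<lambda>q. q * vq F q) \<longlongrightarrow> 0) (at_right 0)"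
proof (rule tendsto_sandwich[where f="\<lambda>_. 0" and h="\<lambda>q. integral {0..q} (vq F)"])
  have unit: "\<forall>\<^sub>F q in at_right 0. q \<in> {0<..<1::real}"
    by (rule eventually_at_right_real) simp
  show "\<forall>\<^sub>F q in at_right 0. 0 \<le> q * vq F q"
    by (rule eventually_mono[OF unit]) (auto intro!: mult_nonneg_nonneg vq_nonneg)
  show "\<forall>\<^sub>F q in at_right 0. q * vq F q \<le> integral {0..q} (vq F)"
    by (rule eventually_mono[OF unit]) (use integral_vq_ge[of 0] in auto)
  have "((\<lambda>q. integral {0..q} (vq F)) \<longlongrightarrow> integral {0..0} (vq F)) (at_right 0)"
    by (rule continuous_on_Icc_at_rightD[OF indefinite_integral_continuous_1[OF integrable_vq]]) simp
  then show "((\<lambda>q. integral {0..q} (vq F)) \<longlongrightarrow> 0) (at_right 0)" by simp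
qed simp

lemma qv_0: "qv F 0 = 0"
  unfolding qv_def using tendsto_Lim[OF _ tendsto_q_vq_0] by simp

lemma qv_eq: "q \<noteq> 0 \<Longrightarrow> qv F q = q * vq F q"
  by (simp add: qv_def)

lemma continuous_on_qv: "continuous_on {0..1} (qv F)"
  unfolding continuous_on_eq_continuous_within
proof
  fix x :: real assume x: "x \<in> {0..1}"
  show "continuous (at x within {0..1}) (qv F)"
  proof (cases "x = 0")
    case True
    have "\<forall>\<^sub>F q in at_right 0. q * vq F q = qv F q"
      by (rule eventually_mono[OF eventually_at_right_real[of 0 1]]) (auto simp: qv_eq)
    then have "(qv F \<longlongrightarrow> qv F 0) (at_right 0)"
      using tendsto_q_vq_0 by (simp add: qv_0 tendsto_cong)
    then show ?thesis
      using True by (simp add: continuous_within at_within_Icc_at_right)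
  next
    case False
    then have "x \<in> {0<..1}" using x by simp
    then have "((\<lambda>q. q * vq F q) \<longlongrightarrow> x * vq F x) (at x within {0<..1})"
      using continuous_on_vq unfolding continuous_on_def by (auto intro!: tendsto_intros)
    moreover have "at x within {0..1} = at x within {0<..1}"
      using \<open>x \<in> {0<..1}\<close> by (intro at_within_nhd[where S="{0<..<2}"]) auto
    moreover have "\<forall>\<^sub>F q in at x within {0<..1}. q * vq F q = qv F q"
      by (auto simp: eventually_at_filter qv_eq)
    ultimately have "(qv F \<longlongrightarrow> qv F x) (at x within {0..1})"
      using False by (simp add: qv_eq tendsto_cong)
    then show ?thesis by (simp add: continuous_within)
  qed
qed

lemma mono_integral_vq_minus_qv:
  assumes "0 \<le> x" "x \<le> y" "y \<le> 1"
  shows "integral {0..x} (vq F) - qv F x \<le> integral {0..y} (vq F) - qv F y"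
proof (cases "x = y")
  case False
  then have "0 < y" using assms by auto
  have "(y - x) * vq F y \<le> integral {0..y} (vq F) - integral {0..x} (vq F)"
    using integral_vq_ge[of x y] integral_vq_diff[of x y] assms \<open>0 < y\<close> by simp
  moreover have "x * vq F y \<le> qv F x"
  proof (cases "x = 0")
    case False
    then show ?thesis
      using vq_antimono[of x y] assms by (simp add: qv_eq mult_left_mono)
  qed (simp add: qv_0)
  ultimately show ?thesis
    using \<open>0 < y\<close> by (simp add: qv_eq algebra_simps)
qed simp

lemma integral_vq_le_integral_1:
  assumes "x \<in> {0..1}"
  shows "integral {0..x} (vq F) \<le> integral {0..1} (vq F)"
proof -
  have "0 \<le> (1 - x) * vq F 1" using assms vq_nonneg[of 1] by simp
  then show ?thesis using integral_vq_diff[of x 1] integral_vq_ge[of x 1] assms by simp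
qed

text \<open>Flatness of the integral on [x, y] forces vq F y = 0, hence vq F = 0 on [y, 1].\<close>
lemma integral_vq_qv_flat:
  assumes "0 \<le> x" "x < y" "y \<le> 1"
    and "integral {0..x} (vq F) = integral {0..y} (vq F)"
  shows "integral {0..y} (vq F) = integral {0..1} (vq F) \<and> qv F y = qv F 1"
proof -
  have "0 < y" using assms by simp
  have "(y - x) * vq F y \<le> 0"
    using integral_vq_ge[of x y] integral_vq_diff[of x y] assms by simp
  then have "vq F y = 0"
    using vq_nonneg[of y] assms by (simp add: mult_le_0_iff)
  moreover have "vq F 1 = 0"
    using vq_antimono[of y 1] vq_nonneg[of 1] assms \<open>vq F y = 0\<close> by simp
  moreover have "integral {y..1} (vq F) \<le> 0"
    using integral_vq_le[of y 1] assms \<open>0 < y\<close> \<open>vq F y = 0\<close> by simp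
  moreover have "0 \<le> integral {y..1} (vq F)"
    using integral_vq_ge[of y 1] assms \<open>vq F 1 = 0\<close> by simp
  ultimately have "integral {y..1} (vq F) = 0" "qv F y = qv F 1"
    using \<open>0 < y\<close> by (simp_all add: qv_eq)
  then show ?thesis
    using integral_vq_diff[of y 1] assms by simp
qed

end

sublocale value_distribution \<subseteq> single_crossing_family F "\<lambda>q. integral {0..q} (vq F)" "qv F"
proof
  show "Plam F lam q = lam * integral {0..q} (vq F) + (1 - lam) * qv F q" for lam q
    by (simp add: Plam_def)
  show "continuous_on {0..1} (\<lambda>q. integral {0..q} (vq F))"
    by (rule indefinite_integral_continuous_1[OF integrable_vq])
  show "continuous_on {0..1} (qv F)"
    by (rule continuous_on_qv)
  show "integral {0..x} (vq F) - qv F x \<le> integral {0..y} (vq F) - qv F y"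
    if "0 \<le> x" "x \<le> y" "y \<le> 1" for x y
    using that by (rule mono_integral_vq_minus_qv)
  show "integral {0..x} (vq F) \<le> integral {0..1} (vq F)" if "x \<in> {0..1}" for x
    using that by (rule integral_vq_le_integral_1)
  show "integral {0..y} (vq F) = integral {0..1} (vq F) \<and> qv F y = qv F 1"
    if "0 \<le> x" "x < y" "y \<le> 1" "integral {0..x} (vq F) = integral {0..y} (vq F)" for x y
    using that by (rule integral_vq_qv_flat)
qed

theorem propositionB1:
  fixes F :: "real \<Rightarrow> real" and vL :: real and vH :: ereal
  assumes "value_dist F vL vH"
  shows "continuous_on {0..} (Rstar F) \<and>
     (\<forall>lam lam'. 0 \<le> lam' \<and> lam' < lam \<longrightarrow> lQ F lam \<ge> lQ F lam' \<and> rQ F lam \<ge> rQ F lam') \<and>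
     upper_hemicontinuous_on {0..1} (Qstar F) \<and>
     (\<forall>q\<in>{lQ F 0..1}. \<exists>lam\<ge>0. q \<in> Qstar F lam) \<and>
     (\<forall>lam lam'. 0 \<le> lam' \<and> lam' < lam \<and> lQ F lam < rQ F lam' \<longrightarrow> rQ F lam' = 1 \<and> rQ F lam = 1)"
proof -
  interpret value_distribution F vL vH
    using assms by unfold_locales
  have "\<exists>lam\<ge>0. q \<in> Qstar F lam" if "q \<in> {lQ F 0..1}" for q
    using Qstar_covers[of q] that by force
  then show ?thesis
    using continuous_Rstar mono_lQ mono_rQ upper_hemicontinuous_Qstar rQ_eq_1_if_overlap
    by (auto simp: mono_def)
qed

end
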